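(* For every $n\in\mathbb{N}$, every formula $\varphi$ of $\mathbf{CPN}_n$ whose propositional letters are among $p_1,\dots,p_m$, and every valuation $\mathcal V$: $\;p_1^{\mathcal V},\dots,p_m^{\mathcal V}\vdash_{(n)}\varphi^{\mathcal V}$.
   Context: Fix $n\in\mathbb{N}$, $n\ge 1$, and write $[n]=\{1,\dots,n\}$. Chains: a chain over $[n]$ is a finite sequence of distinct elements of $[n]$; chains with the same length and the same symbols are identified, so a chain is effectively a subset of $[n]$. $c_k$ denotes a chain with $k$ symbols, $\epsilon$ the empty chain, and $(n)$ the chain consisting of all symbols of $[n]$. For chains $c,d$: the concatenation $c\cdot d$ is the chain of symbols occurring in $c$ or in $d$; the coconcatenation $c\otimes d$ is the chain of symbols occurring in exactly one of $c,d$; $d$ is a subchain of $c$ if every symbol of $d$ is a symbol of $c$. The complementary chain $c'_{n-k}$ of $c_k$ is the chain of the symbols of $[n]$ not occurring in $c_k$. Language of $\mathbf{CPN}_n$: a countable set $P_n$ of propositional letters; constants $\perp_c$ for each chain $c$ over $[n]$ with $1\le |c|\le n-1$, and constants $\perp_{(n)}$ (contradiction) and $\top_{(n)}$ (truth); a unary connective $\neg_c$ for each nonempty chain $c$ over $[n]$ ($\neg_{(n)}$ is the strong negation; the $\neg_c$ with $|c|\le n-1$ are weak negations); a binary connective $\to_{(n)}$. Formulas: propositional letters and constants are formulas; if $\varphi,\psi$ are formulas then so are $\neg_c\varphi$ and $(\varphi\to_{(n)}\psi)$. Conventions: $\neg_\epsilon\varphi:=\varphi$, $\perp_\epsilon:=\top_{(n)}$,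 and $\perp_c$ for $c=(n)$ means $\perp_{(n)}$. Abbreviations: $\varphi\wedge_{(n)}\psi:=\neg_{(n)}(\varphi\to_{(n)}\neg_{(n)}\psi)$, $\varphi\vee_{(n)}\psi:=\neg_{(n)}\varphi\to_{(n)}\psi$, $\varphi\leftrightarrow_{(n)}\psi:=(\varphi\to_{(n)}\psi)\wedge_{(n)}(\psi\to_{(n)}\varphi)$. Axioms of $\mathbf{CPN}_n$, for all formulas $\varphi,\psi,\chi$ and all nonempty chains $c_k,c_r$ over $[n]$: (A1) $\varphi\to_{(n)}(\psi\to_{(n)}\varphi)$; (A2) $(\varphi\to_{(n)}(\psi\to_{(n)}\chi))\to_{(n)}((\varphi\to_{(n)}\psi)\to_{(n)}(\varphi\to_{(n)}\chi))$; (A3) $(\neg_{(n)}\psi\to_{(n)}\neg_{(n)}\varphi)\to_{(n)}((\neg_{(n)}\psi\to_{(n)}\varphi)\to_{(n)}\psi)$; (A4) $\varphi\to_{(n)}(\perp_{c_k}\to_{(n)}\neg_{c_k}\varphi)$; (A5) $\neg_{c_k}\neg_{c_r}\varphi\leftrightarrow_{(n)}\neg_{c_k\otimes c_r}\varphi$; (A6) $\neg_{c_k}\perp_{c_r}\leftrightarrow_{(n)}\perp_{c_k\otimes c_r}$; (A7) $\perp_{c_k}\to_{(n)}\perp_{c_r}$, whenever $c_r$ is a subchain of $c_k$. The only rule of inference is modus ponens (from $\varphi$ and $\varphi\to_{(n)}\psi$ infer $\psi$). For a set $\Sigma$ of formulas, $\Sigma\vdash_{(n)}\varphi$ means there is a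 finite sequence of formulas ending with $\varphi$, each of which is an axiom, a member of $\Sigma$, or obtained from two earlier members by modus ponens; $\vdash_{(n)}\varphi$ means $\emptyset\vdash_{(n)}\varphi$. Semantics: for each $i\in[n]$ there is a world $\mathcal M_i=\{T_i,F_i\}$ (pairwise disjoint sets). A valuation $\mathcal V$ assigns to each propositional letter $p$ and each $i\in[n]$ a value $v_i(p)\in\mathcal M_i$ (independently for different $i$). It extends to all formulas, for each $i$, by: $\bar v_i(p)=v_i(p)$ for letters; $\bar v_i(\perp_c)=F_i$ if $i$ is a symbol of $c$ and $T_i$ otherwise (so $\bar v_i(\perp_{(n)})=F_i$ and $\bar v_i(\top_{(n)})=T_i$); $\bar v_i(\neg_c\varphi)=\bar v_i(\varphi)$ if $i$ is not a symbol of $c$, and the opposite value ($T_i\leftrightarrow F_i$) if $i$ is a symbol of $c$; $\bar v_i(\varphi\to_{(n)}\psi)=F_i$ iff $\bar v_i(\varphi)=T_i$ and $\bar v_i(\psi)=F_i$, otherwise $T_i$ (hence $\wedge_{(n)},\vee_{(n)}$ behave classically in each world). Write $\bar{\mathcal V}(\varphi)=(\bar v_1(\varphi),\dots,\bar v_n(\varphi))$. A formula $\varphi$ is a tautology, written $\models_{(n)}\varphi$, iff $\bar{\mathcal V}(\varphi)=(T_1,\dots,T_n)$ for every valuation $\mathcal V$. Given a valuation $\mathcal V$ and a chain $c$ over $[n]$ (possibly empty), a formula $\varphi$ is $c$-contingent (under $\mathcal V$) if $\bar v_i(\varphi)=F_i$ for every symbol $i$ of $c$ and $\bar v_i(\varphi)=T_i$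 for every $i\in[n]$ not in $c$. Every formula is $c$-contingent for exactly one chain $c$, and one sets $\varphi^{\mathcal V}:=\neg_c\varphi$ for that $c$ (so $\varphi^{\mathcal V}=\varphi$ when $\bar{\mathcal V}(\varphi)=(T_1,\dots,T_n)$). *)

theory Defs
  imports Main
begin

text \<open>Chains over [n] are represented by subsets of {1..n}.
  Constants: Bot c with c \<subseteq> {1..n}; Bot {} is \<top>_(n), Bot {1..n} is \<bottom>_(n).
  Weak/strong negations: Neg c with c a nonempty subset of {1..n}.\<close>

datatype form = Letter nat | Bot "nat set" | Neg "nat set" form | Imp form form

fun letters :: "form \<Rightarrow> nat set" where
  "letters (Letter p) = {p}"
| "letters (Bot c) = {}"
| "letters (Neg c a) = letters a"
| "letters (Imp a b) = letters a \<union> letters b"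

fun wf :: "nat \<Rightarrow> form \<Rightarrow> bool" where
  "wf n (Letter p) = True"
| "wf n (Bot c) = (c \<subseteq> {1..n})"
| "wf n (Neg c a) = (c \<noteq> {} \<and> c \<subseteq> {1..n} \<and> wf n a)"
| "wf n (Imp a b) = (wf n a \<and> wf n b)"

definition neg :: "nat set \<Rightarrow> form \<Rightarrow> form" where
  "neg c a = (if c = {} then a else Neg c a)"

definition coconc :: "nat set \<Rightarrow> nat set \<Rightarrow> nat set" where
  "coconc c d = (c - d) \<union> (d - c)"

definition sneg :: "nat \<Rightarrow> form \<Rightarrow> form" where
  "sneg n a = Neg {1..n} a"

definition conj :: "nat \<Rightarrow> form \<Rightarrow> form \<Rightarrow> form" where
  "conj n a b = sneg n (Imp a (sneg n b))"

definition iff :: "nat \<Rightarrow> form \<Rightarrow> form \<Rightarrow> form" where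
  "iff n a b = conj n (Imp a b) (Imp b a)"

inductive axiom :: "nat \<Rightarrow> form \<Rightarrow> bool" for n :: nat where
  A1: "\<lbrakk>wf n a; wf n b\<rbrakk> \<Longrightarrow> axiom n (Imp a (Imp b a))"
| A2: "\<lbrakk>wf n a; wf n b; wf n c\<rbrakk> \<Longrightarrow>
        axiom n (Imp (Imp a (Imp b c)) (Imp (Imp a b) (Imp a c)))"
| A3: "\<lbrakk>wf n a; wf n b\<rbrakk> \<Longrightarrow>
        axiom n (Imp (Imp (sneg n b) (sneg n a)) (Imp (Imp (sneg n b) a) b))"
| A4: "\<lbrakk>wf n a; ck \<noteq> {}; ck \<subseteq> {1..n}\<rbrakk> \<Longrightarrow>
        axiom n (Imp a (Imp (Bot ck) (neg ck a)))"
| A5: "\<lbrakk>wf n a; ck \<noteq> {}; ck \<subseteq> {1..n}; cr \<noteq> {}; cr \<subseteq> {1..n}\<rbrakk> \<Longrightarrow>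
        axiom n (iff n (neg ck (neg cr a)) (neg (coconc ck cr) a))"
| A6: "\<lbrakk>ck \<noteq> {}; ck \<subseteq> {1..n}; cr \<noteq> {}; cr \<subseteq> {1..n}\<rbrakk> \<Longrightarrow>
        axiom n (iff n (neg ck (Bot cr)) (Bot (coconc ck cr)))"
| A7: "\<lbrakk>ck \<noteq> {}; ck \<subseteq> {1..n}; cr \<noteq> {}; cr \<subseteq> ck\<rbrakk> \<Longrightarrow>
        axiom n (Imp (Bot ck) (Bot cr))"

inductive deriv :: "nat \<Rightarrow> form set \<Rightarrow> form \<Rightarrow> bool" for n :: nat and S :: "form set" where
  ax: "axiom n a \<Longrightarrow> deriv n S a"
| hyp: "a \<in> S \<Longrightarrow> deriv n S a"
| mp: "\<lbrakk>deriv n S a; deriv n S (Imp a b)\<rbrakk> \<Longrightarrow> deriv n S b"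

text \<open>Valuations: V p i = True means v_i(p) = T_i.\<close>
fun eval :: "(nat \<Rightarrow> nat \<Rightarrow> bool) \<Rightarrow> nat \<Rightarrow> form \<Rightarrow> bool" where
  "eval V i (Letter p) = V p i"
| "eval V i (Bot c) = (i \<notin> c)"
| "eval V i (Neg c a) = (if i \<in> c then \<not> eval V i a else eval V i a)"
| "eval V i (Imp a b) = (eval V i a \<longrightarrow> eval V i b)"

text \<open>The unique chain c for which a is c-contingent under V.\<close>
definition contchain :: "nat \<Rightarrow> (nat \<Rightarrow> nat \<Rightarrow> bool) \<Rightarrow> form \<Rightarrow> nat set" where
  "contchain n V a = {i \<in> {1..n}. \<not> eval V i a}"

definition vmod :: "nat \<Rightarrow> (nat \<Rightarrow> nat \<Rightarrow> bool) \<Rightarrow> form \<Rightarrow> form" where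
  "vmod n V a = neg (contchain n V a) a"

end

theory Submission
  imports Defs
begin

text \<open>Constants and weak negations are handled
  directly by A6 and A5, since the contingency chain of \<open>\<not>_d \<psi>\<close> is the coconcatenation of
  that of \<open>\<psi>\<close> with \<open>d\<close>. For an implication, the constant \<open>\<bottom>\<close> of the chain \<open>[n] - {i}\<close>
  selects the world \<open>i\<close>: with A4 and A7 it lets a weak negation \<open>\<not>_c \<psi>\<close> be changed at every
  symbol other than \<open>i\<close>, so under this hypothesis \<open>\<not>_c \<psi>\<close> is equivalent to \<open>\<psi>\<close> or to its
  strong negation according to whether \<open>i \<notin> c\<close>, and the classical truth table of implication
  applies. A formula \<open>X\<close> implied by every world selector is derivable outright: from the strong
  negation of \<open>X\<close> one derives \<open>\<bottom>_{i}\<close> for every \<open>i\<close>, and these flip the strong negation of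
  \<open>X\<close> back to \<open>X\<close>.\<close>

lemma coconc_subset: "c \<subseteq> A \<Longrightarrow> d \<subseteq> A \<Longrightarrow> coconc c d \<subseteq> A"
  by (auto simp: coconc_def)

lemma coconc_empty [simp]: "coconc {} c = c" "coconc c {} = c"
  by (auto simp: coconc_def)

lemma coconc_self [simp]: "coconc c c = {}"
  by (auto simp: coconc_def)

lemma coconc_cancel [simp]: "coconc c (coconc c d) = d" "coconc d (coconc c d) = c"
  "coconc (coconc c d) d = c"
  by (auto simp: coconc_def)

lemma neg_empty [simp]: "neg {} a = a"
  by (simp add: neg_def)

lemma wf_neg [simp]: "wf n (neg c a) \<longleftrightarrow> (c = {} \<or> c \<subseteq> {1..n}) \<and> wf n a"
  by (auto simp: neg_def)

lemma contchain_subset: "contchain n V a \<subseteq> {1..n}"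
  by (auto simp: contchain_def)

lemma contchain_Bot: "c \<subseteq> {1..n} \<Longrightarrow> contchain n V (Bot c) = c"
  by (auto simp: contchain_def)

lemma contchain_Neg: "d \<subseteq> {1..n} \<Longrightarrow> contchain n V (Neg d a) = coconc (contchain n V a) d"
  by (auto simp: contchain_def coconc_def)

lemma contchain_Imp: "contchain n V (Imp a b) = contchain n V b - contchain n V a"
  by (auto simp: contchain_def)

locale cpn =
  fixes n :: nat
  assumes n_pos: "1 \<le> n"
begin

abbreviation derives :: "form set \<Rightarrow> form \<Rightarrow> bool" (infix "\<turnstile>" 50) where
  "S \<turnstile> a \<equiv> deriv n S a"

definition wf_hyps :: "form set \<Rightarrow> bool" where
  "wf_hyps S \<longleftrightarrow> (\<forall>a\<in>S. wf n a)"

lemma wf_hyps_insert [simp]: "wf_hyps (insert a S) \<longleftrightarrow> wf n a \<and> wf_hyps S"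
  by (simp add: wf_hyps_def)

lemma sneg_eq_neg: "sneg n a = neg {1..n} a"
  using n_pos by (simp add: sneg_def neg_def)

lemma wf_sneg [simp]: "wf n (sneg n a) \<longleftrightarrow> wf n a"
  using n_pos by (simp add: sneg_def)

lemma wf_conj [simp]: "wf n (conj n a b) \<longleftrightarrow> wf n a \<and> wf n b"
  by (simp add: conj_def)

lemma wf_iff [simp]: "wf n (iff n a b) \<longleftrightarrow> wf n a \<and> wf n b"
  by (auto simp: iff_def)

lemma axiom_wf: "axiom n a \<Longrightarrow> wf n a"
  by (induction rule: axiom.induct) (auto simp: coconc_def)

lemma deriv_wf: "S \<turnstile> a \<Longrightarrow> wf_hyps S \<Longrightarrow> wf n a"
  by (induction rule: deriv.induct) (auto simp: wf_hyps_def dest: axiom_wf)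

lemma deriv_mono: "S \<turnstile> a \<Longrightarrow> S \<subseteq> T \<Longrightarrow> T \<turnstile> a"
  by (induction rule: deriv.induct) (auto intro: deriv.intros)

lemma deriv_insert: "S \<turnstile> a \<Longrightarrow> insert b S \<turnstile> a"
  by (erule deriv_mono) blast

lemma deriv_insert_self: "insert a S \<turnstile> a"
  by (simp add: deriv.hyp)

lemma imp_intro_consequent: "S \<turnstile> b \<Longrightarrow> wf n a \<Longrightarrow> wf n b \<Longrightarrow> S \<turnstile> Imp a b"
  by (erule deriv.mp) (intro deriv.ax axiom.A1)

lemma imp_refl: "wf n a \<Longrightarrow> S \<turnstile> Imp a a"
proof -
  assume a: "wf n a"
  have "S \<turnstile> Imp (Imp a (Imp (Imp a a) a)) (Imp (Imp a (Imp a a)) (Imp a a))"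
    using a by (intro deriv.ax axiom.A2) auto
  moreover have "S \<turnstile> Imp a (Imp (Imp a a) a)" "S \<turnstile> Imp a (Imp a a)"
    using a by (intro deriv.ax axiom.A1; simp)+
  ultimately show ?thesis
    by (meson deriv.mp)
qed

lemma deduction:
  assumes "insert a S \<turnstile> b" and "wf n a" and "wf_hyps S"
  shows "S \<turnstile> Imp a b"
  using assms(1)
proof (induction rule: deriv.induct)
  case (ax c)
  then show ?case
    using assms(2) by (blast intro: imp_intro_consequent deriv.ax axiom_wf)
next
  case (hyp c)
  then show ?case
    using assms(2,3) by (auto simp: wf_hyps_def intro: imp_refl imp_intro_consequent deriv.hyp)
next
  case (mp c d)
  have "wf n c" "wf n d"
    using deriv_wf[OF mp(1)] deriv_wf[OF mp(2)] assms(2,3) by auto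
  then have "S \<turnstile> Imp (Imp a (Imp c d)) (Imp (Imp a c) (Imp a d))"
    using assms(2) by (intro deriv.ax axiom.A2)
  then show ?case
    using mp.IH by (meson deriv.mp)
qed

lemma clavius: "S \<turnstile> Imp (sneg n a) a \<Longrightarrow> wf n a \<Longrightarrow> S \<turnstile> a"
proof -
  assume h: "S \<turnstile> Imp (sneg n a) a" and a: "wf n a"
  have "S \<turnstile> Imp (Imp (sneg n a) (sneg n a)) (Imp (Imp (sneg n a) a) a)"
    using a by (intro deriv.ax axiom.A3)
  then show ?thesis
    using h imp_refl[of "sneg n a"] a by (meson deriv.mp wf_sneg)
qed

lemma ex_falso: "S \<turnstile> a \<Longrightarrow> S \<turnstile> sneg n a \<Longrightarrow> wf n a \<Longrightarrow> wf n b \<Longrightarrow> S \<turnstile> b"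
proof -
  assume a: "S \<turnstile> a" "S \<turnstile> sneg n a" and wf: "wf n a" "wf n b"
  have "S \<turnstile> Imp (Imp (sneg n b) (sneg n a)) (Imp (Imp (sneg n b) a) b)"
    using wf by (intro deriv.ax axiom.A3)
  moreover have "S \<turnstile> Imp (sneg n b) (sneg n a)" "S \<turnstile> Imp (sneg n b) a"
    using a wf by (auto intro: imp_intro_consequent)
  ultimately show ?thesis
    by (meson deriv.mp)
qed

lemma sneg_sneg_elim: "S \<turnstile> sneg n (sneg n a) \<Longrightarrow> wf n a \<Longrightarrow> S \<turnstile> a"
proof -
  assume h: "S \<turnstile> sneg n (sneg n a)" and a: "wf n a"
  have "S \<turnstile> Imp (Imp (sneg n a) (sneg n (sneg n a))) (Imp (Imp (sneg n a) (sneg n a)) a)"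
    using a by (intro deriv.ax axiom.A3) auto
  moreover have "S \<turnstile> Imp (sneg n a) (sneg n (sneg n a))"
    using h a by (auto intro: imp_intro_consequent)
  ultimately show ?thesis
    using imp_refl[of "sneg n a"] a by (meson deriv.mp wf_sneg)
qed

lemma sneg_intro:
  assumes "insert a S \<turnstile> b" and "insert a S \<turnstile> sneg n b"
    and "wf n a" and "wf n b" and "wf_hyps S"
  shows "S \<turnstile> sneg n a"
proof -
  have "insert a S \<turnstile> sneg n a"
    using ex_falso[OF assms(1,2)] assms(3,4) by simp
  then have self: "S \<turnstile> Imp a (sneg n a)"
    using assms(3,5) by (rule deduction)
  have "insert (sneg n (sneg n a)) S \<turnstile> sneg n a"
    using deriv.mp[OF sneg_sneg_elim[OF deriv_insert_self] deriv_insert[OF self]] assms(3) .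
  then have "S \<turnstile> Imp (sneg n (sneg n a)) (sneg n a)"
    by (rule deduction) (use assms in auto)
  then show ?thesis
    by (rule clavius) (use assms in auto)
qed

lemma imp_intro_sneg:
  assumes "S \<turnstile> sneg n a" and "wf n a" and "wf n b" and "wf_hyps S"
  shows "S \<turnstile> Imp a b"
proof -
  have "insert a S \<turnstile> b"
    using ex_falso[OF deriv_insert_self deriv_insert[OF assms(1)]] assms(2,3) .
  then show ?thesis
    using assms(2,4) by (rule deduction)
qed

lemma sneg_imp_intro:
  assumes "S \<turnstile> a" and "S \<turnstile> sneg n b" and "wf n a" and "wf n b" and "wf_hyps S"
  shows "S \<turnstile> sneg n (Imp a b)"
proof (rule sneg_intro)
  show "insert (Imp a b) S \<turnstile> b"
    using deriv.mp[OF deriv_insert[OF assms(1)] deriv_insert_self] .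
  show "insert (Imp a b) S \<turnstile> sneg n b"
    using assms(2) by (rule deriv_insert)
qed (use assms in auto)

lemma contrapos:
  assumes "S \<turnstile> Imp a b" and "wf n a" and "wf n b" and "wf_hyps S"
  shows "S \<turnstile> Imp (sneg n b) (sneg n a)"
proof -
  let ?S = "insert (sneg n b) S"
  have "insert a ?S \<turnstile> b"
    using deriv.mp[OF deriv_insert_self deriv_insert[OF deriv_insert[OF assms(1)]]] .
  moreover have "insert a ?S \<turnstile> sneg n b"
    by (rule deriv_insert[OF deriv_insert_self])
  ultimately have "?S \<turnstile> sneg n a"
    by (rule sneg_intro) (use assms in auto)
  then show ?thesis
    by (rule deduction) (use assms in auto)
qed

lemma conj_elim1:
  assumes "S \<turnstile> conj n a b" and "wf n a" and "wf n b" and "wf_hyps S"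
  shows "S \<turnstile> a"
proof -
  let ?S = "insert (sneg n a) S"
  have "?S \<turnstile> Imp a (sneg n b)"
    by (rule imp_intro_sneg[OF deriv_insert_self]) (use assms in auto)
  moreover have "?S \<turnstile> sneg n (Imp a (sneg n b))"
    using assms(1) by (simp add: conj_def deriv_insert)
  ultimately have "S \<turnstile> sneg n (sneg n a)"
    by (rule sneg_intro) (use assms in auto)
  then show ?thesis
    using assms(2) by (rule sneg_sneg_elim)
qed

lemma conj_elim2:
  assumes "S \<turnstile> conj n a b" and "wf n a" and "wf n b" and "wf_hyps S"
  shows "S \<turnstile> b"
proof -
  let ?S = "insert (sneg n b) S"
  have "?S \<turnstile> Imp a (sneg n b)"
    by (rule imp_intro_consequent[OF deriv_insert_self]) (use assms in auto)
  moreover have "?S \<turnstile> sneg n (Imp a (sneg n b))"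
    using assms(1) by (simp add: conj_def deriv_insert)
  ultimately have "S \<turnstile> sneg n (sneg n b)"
    by (rule sneg_intro) (use assms in auto)
  then show ?thesis
    using assms(3) by (rule sneg_sneg_elim)
qed

lemma deriv_iff_axiom:
  assumes "axiom n (iff n a b)" and "wf_hyps S"
  shows "S \<turnstile> a \<longleftrightarrow> S \<turnstile> b"
proof -
  have wf: "wf n a" "wf n b"
    using axiom_wf[OF assms(1)] by auto
  have conj: "S \<turnstile> conj n (Imp a b) (Imp b a)"
    using deriv.ax[OF assms(1)] by (simp add: iff_def)
  have "S \<turnstile> Imp a b" "S \<turnstile> Imp b a"
    using conj_elim1[OF conj] conj_elim2[OF conj] wf assms(2) by simp_all
  then show ?thesis
    by (meson deriv.mp)
qed

lemma neg_neg_iff: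
  assumes "k \<subseteq> {1..n}" and "r \<subseteq> {1..n}" and "wf n a" and "wf_hyps S"
  shows "S \<turnstile> neg k (neg r a) \<longleftrightarrow> S \<turnstile> neg (coconc k r) a"
proof (cases "k = {} \<or> r = {}")
  case False
  then show ?thesis
    using assms by (intro deriv_iff_axiom axiom.A5) auto
qed auto

lemma neg_Bot_iff:
  assumes "k \<subseteq> {1..n}" and "r \<subseteq> {1..n}" and "r \<noteq> {}" and "wf_hyps S"
  shows "S \<turnstile> neg k (Bot r) \<longleftrightarrow> S \<turnstile> Bot (coconc k r)"
proof (cases "k = {}")
  case False
  then show ?thesis
    using assms by (intro deriv_iff_axiom axiom.A6) auto
qed simp

lemma Bot_anti_mono: "S \<turnstile> Bot c \<Longrightarrow> c \<subseteq> {1..n} \<Longrightarrow> d \<subseteq> c \<Longrightarrow> d \<noteq> {} \<Longrightarrow> S \<turnstile> Bot d"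
  by (erule deriv.mp) (intro deriv.ax axiom.A7; auto)

lemma deriv_Bot_empty: "wf_hyps S \<Longrightarrow> S \<turnstile> Bot {}"
proof -
  assume S: "wf_hyps S"
  let ?B = "Bot {1..n}"
  have "S \<turnstile> Imp ?B (Imp ?B (sneg n ?B))"
    using n_pos by (simp add: sneg_eq_neg deriv.ax axiom.A4)
  then have "insert ?B S \<turnstile> sneg n ?B"
    by (meson deriv.mp deriv_insert deriv_insert_self)
  then have "S \<turnstile> sneg n ?B"
    by (rule sneg_intro[OF deriv_insert_self]) (use S in auto)
  then show ?thesis
    using neg_Bot_iff[of "{1..n}" "{1..n}"] n_pos S by (simp add: sneg_eq_neg)
qed

lemma neg_Bot_self: "wf_hyps S \<Longrightarrow> c \<subseteq> {1..n} \<Longrightarrow> S \<turnstile> neg c (Bot c)"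
  using deriv_Bot_empty neg_Bot_iff[of c c] by (cases "c = {}") auto

text \<open>By A4, each derivable \<open>\<bottom>_{j}\<close> toggles a weak negation at the symbol \<open>j\<close>.\<close>

lemma neg_coconc_by_Bots:
  assumes "S \<turnstile> neg c a" and "\<forall>j\<in>E. S \<turnstile> Bot {j}" and "E \<subseteq> {1..n}"
    and "c \<subseteq> {1..n}" and "wf n a" and "wf_hyps S"
  shows "S \<turnstile> neg (coconc c E) a"
proof -
  have "finite E"
    using assms(3) finite_subset by blast
  then show ?thesis
    using assms(2,3)
  proof (induction E rule: finite_induct)
    case empty
    then show ?case using assms(1) by simp
  next
    case (insert j E)
    have c: "coconc c E \<subseteq> {1..n}"
      using insert.prems assms(4) by (intro coconc_subset) auto
    have IH: "S \<turnstile> neg (coconc c E) a"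
      using insert.IH insert.prems by simp
    have "S \<turnstile> Imp (neg (coconc c E) a) (Imp (Bot {j}) (neg {j} (neg (coconc c E) a)))"
      using insert.prems assms(5) c by (intro deriv.ax axiom.A4) auto
    then have "S \<turnstile> neg {j} (neg (coconc c E) a)"
      using IH insert.prems(1) by (blast intro: deriv.mp)
    then have "S \<turnstile> neg (coconc {j} (coconc c E)) a"
      using neg_neg_iff[of "{j}" "coconc c E" a S] c insert.prems(2) assms(5,6) by simp
    moreover have "coconc {j} (coconc c E) = coconc c (insert j E)"
      using insert.hyps(2) by (auto simp: coconc_def)
    ultimately show ?case
      by simp
  qed
qed

definition signed :: "bool \<Rightarrow> form \<Rightarrow> form" where
  "signed t a = (if t then a else sneg n a)"

lemma wf_signed [simp]: "wf n (signed t a) \<longleftrightarrow> wf n a"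
  by (simp add: signed_def)

lemma neg_in_world:
  assumes "i \<in> {1..n}" and "S \<turnstile> Bot ({1..n} - {i})"
    and "c \<subseteq> {1..n}" and "wf n a" and "wf_hyps S"
  shows "S \<turnstile> neg c a \<longleftrightarrow> S \<turnstile> signed (i \<notin> c) a"
proof -
  define d where "d = (if i \<in> c then {1..n} else {})"
  have d: "d \<subseteq> {1..n}" and signed_d: "signed (i \<notin> c) a = neg d a"
    by (auto simp: d_def signed_def sneg_eq_neg)
  have E: "coconc c d \<subseteq> {1..n} - {i}"
    using assms(3) by (auto simp: d_def coconc_def)
  have Bots: "\<forall>j\<in>coconc c d. S \<turnstile> Bot {j}"
    using E by (auto intro!: Bot_anti_mono[OF assms(2)])
  show ?thesis
    unfolding signed_d
    using neg_coconc_by_Bots[OF _ Bots, of c a] neg_coconc_by_Bots[OF _ Bots, of d a] E d assms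
    by auto
qed

lemma imp_signed:
  assumes "S \<turnstile> signed p a" and "S \<turnstile> signed q b"
    and "wf n a" and "wf n b" and "wf_hyps S"
  shows "S \<turnstile> signed (p \<longrightarrow> q) (Imp a b)"
  using assms
  by (cases p; cases q) (auto simp: signed_def intro: imp_intro_consequent imp_intro_sneg sneg_imp_intro)

lemma deriv_by_worlds:
  assumes worlds: "\<forall>i\<in>{1..n}. S \<turnstile> Imp (Bot ({1..n} - {i})) X"
    and "wf n X" and "wf_hyps S"
  shows "S \<turnstile> X"
proof (cases "n = 1")
  case True
  then have "S \<turnstile> Imp (Bot {}) X"
    using worlds by auto
  with deriv_Bot_empty[OF assms(3)] show ?thesis
    by (rule deriv.mp)
next
  case False
  let ?S = "insert (sneg n X) S"
  have "?S \<turnstile> neg {1..n} X"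
    using deriv_insert_self[of "sneg n X" S] by (simp add: sneg_eq_neg)
  moreover have "\<forall>i\<in>{1..n}. ?S \<turnstile> Bot {i}"
  proof
    fix i assume i: "i \<in> {1..n}"
    have ne: "{1..n} - {i} \<noteq> {}"
    proof
      assume "{1..n} - {i} = {}"
      moreover have "1 \<in> {1..n}" "2 \<in> {1..n}"
        using False n_pos by auto
      ultimately have "1 = i" "2 = i"
        by blast+
      then show False
        by simp
    qed
    have "S \<turnstile> Imp (sneg n X) (sneg n (Bot ({1..n} - {i})))"
      by (rule contrapos) (use worlds i assms in auto)
    then have "?S \<turnstile> neg {1..n} (Bot ({1..n} - {i}))"
      using deriv.mp[OF deriv_insert_self deriv_insert] by (simp add: sneg_eq_neg)
    moreover have "coconc {1..n} ({1..n} - {i}) = {i}"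
      using i by (auto simp: coconc_def)
    ultimately show "?S \<turnstile> Bot {i}"
      using neg_Bot_iff[of "{1..n}" "{1..n} - {i}" ?S] ne assms(2,3) by auto
  qed
  ultimately have "?S \<turnstile> neg (coconc {1..n} {1..n}) X"
    by (rule neg_coconc_by_Bots) (use assms in auto)
  then have "?S \<turnstile> X"
    by simp
  then have "S \<turnstile> Imp (sneg n X) X"
    by (rule deduction) (use assms in auto)
  then show ?thesis
    using assms(2) by (rule clavius)
qed

lemma neg_Imp:
  assumes "S \<turnstile> neg ca a" and "S \<turnstile> neg cb b"
    and "ca \<subseteq> {1..n}" and "cb \<subseteq> {1..n}" and "wf n a" and "wf n b" and "wf_hyps S"
  shows "S \<turnstile> neg (cb - ca) (Imp a b)"
proof (rule deriv_by_worlds, intro ballI)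
  fix i assume i: "i \<in> {1..n}"
  let ?S = "insert (Bot ({1..n} - {i})) S"
  have S: "wf_hyps ?S" and world: "?S \<turnstile> Bot ({1..n} - {i})"
    using assms(7) by (auto intro: deriv_insert_self)
  have "?S \<turnstile> neg ca a" "?S \<turnstile> neg cb b"
    using assms(1,2) by (simp_all add: deriv_insert)
  then have "?S \<turnstile> signed (i \<notin> ca) a" "?S \<turnstile> signed (i \<notin> cb) b"
    using neg_in_world[OF i world] assms(3-6) S by simp_all
  moreover have "i \<notin> cb - ca \<longleftrightarrow> (i \<notin> ca \<longrightarrow> i \<notin> cb)"
    by blast
  ultimately have "?S \<turnstile> signed (i \<notin> cb - ca) (Imp a b)"
    using assms(5,6) S by (simp only:) (rule imp_signed)
  moreover have "cb - ca \<subseteq> {1..n}" "wf n (Imp a b)"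
    using assms(4-6) by auto
  ultimately have "?S \<turnstile> neg (cb - ca) (Imp a b)"
    using neg_in_world[OF i world _ _ S] by blast
  then show "S \<turnstile> Imp (Bot ({1..n} - {i})) (neg (cb - ca) (Imp a b))"
    by (rule deduction) (use assms in auto)
qed (use assms in auto)

lemma deriv_vmod:
  assumes "wf_hyps S" and "wf n \<phi>" and "\<forall>p\<in>letters \<phi>. S \<turnstile> vmod n V (Letter p)"
  shows "S \<turnstile> vmod n V \<phi>"
  using assms(2,3)
proof (induction \<phi>)
  case (Letter p)
  then show ?case by simp
next
  case (Bot c)
  then show ?case
    using neg_Bot_self assms(1) by (simp add: vmod_def contchain_Bot)
next
  case (Neg d a)
  let ?ca = "contchain n V a"
  have d: "d \<noteq> {}" "d \<subseteq> {1..n}" and a: "wf n a"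
    using Neg.prems by auto
  have "S \<turnstile> neg (coconc (coconc ?ca d) d) a"
    using Neg by (simp add: vmod_def)
  then have "S \<turnstile> neg (coconc ?ca d) (neg d a)"
    using neg_neg_iff[of "coconc ?ca d" d a] coconc_subset[OF contchain_subset d(2)] d a assms(1)
    by blast
  then show ?case
    using d by (simp add: vmod_def contchain_Neg neg_def[of d])
next
  case (Imp a b)
  then have "S \<turnstile> neg (contchain n V a) a" "S \<turnstile> neg (contchain n V b) b"
    by (simp_all add: vmod_def)
  then show ?case
    using neg_Imp contchain_subset Imp.prems assms(1) by (simp add: vmod_def contchain_Imp)
qed

end

theorem mainTheorem14:
  fixes n :: nat and phi :: form and L :: "nat set" and V :: "nat \<Rightarrow> nat \<Rightarrow> bool"
  assumes "n \<ge> 1" and "wf n phi" and "finite L" and "letters phi \<subseteq> L"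
  shows "deriv n {vmod n V (Letter p) | p. p \<in> L} (vmod n V phi)"
proof -
  interpret cpn n
    using assms(1) by unfold_locales
  let ?S = "{vmod n V (Letter p) | p. p \<in> L}"
  have "wf_hyps ?S"
    using contchain_subset by (auto simp: wf_hyps_def vmod_def)
  moreover have "\<forall>p\<in>letters phi. ?S \<turnstile> vmod n V (Letter p)"
    using assms(4) by (auto intro: deriv.hyp)
  ultimately show ?thesis
    using deriv_vmod assms(2) by blast
qed

end
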